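(* Let $M$ be a duplicial module in a pre-additive category, and define the Connes operator $B_n=\sum_{i=0}^n d_n\kappa_n^i:M_n\to M_{n+1}$ for $n\ge0$ (and $B_{-1}=0$). Then for all $n\ge0$, $$b_{n+1}B_n+B_{n-1}b_n=1-\pi_n\qquad\text{and}\qquad B_{n+1}B_n=0 .$$
   Context: Let $\mathcal A$ be a pre-additive category. Let $\Lambda_+$ be the category with objects $[n]$, $n\ge0$, where $\Lambda_+([m],[n])$ is the set of weakly monotone $f:\mathbb Z\to\mathbb Z$ with $f(j+m+1)=f(j)+n+1$ for all $j$ and $f(0)\ge0$. Define $\varepsilon^n_i:[n-1]\to[n]$ ($n\ge1$, $0\le i\le n$) by $\varepsilon^n_i(j)=j$ for $0\le j<i$, $j+1$ for $i\le j\le n-1$, and $\eta^n_i:[n+1]\to[n]$ ($0\le i\le n+1$) by $\eta^n_i(j)=j$ for $0\le j\le i$, $j-1$ for $i<j\le n+1$. A duplicial module is a functor $M:\Lambda_+^{op}\to\mathcal A$; $M_n=M([n])$, $\partial_{n,i}=M(\varepsilon^n_i):M_n\to M_{n-1}$, $s_{n,i}=M(\eta^n_i):M_n\to M_{n+1}$. Convention $M_{-1}=0$, maps into/out of it zero. Define $b_n=\sum_{i=0}^n(-1)^i\partial_{n,i}$ ($b_0=0$), $d_n=\sum_{i=0}^{n+1}(-1)^is_{n,i}$, the Karoubi operator $\kappa_n=(-1)^n(\partial_{n+1,0}s_{n,n+1}-s_{n-1,n}\partial_{n,0})$ (so $\kappa_0=\partial_{1,0}s_{0,1}$), and the Dwyer–Kan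 operator $\pi_n=(-1)^n\partial_{n+1,0}\kappa_{n+1}^n s_{n,n+1}$. *)

theory Defs
  imports Main
begin

record ('o, 'm) pacat =
  pa_hom  :: "'o \<Rightarrow> 'o \<Rightarrow> 'm set"
  pa_comp :: "'m \<Rightarrow> 'm \<Rightarrow> 'm"         (* pa_comp g f = g \<circ> f *)
  pa_id   :: "'o \<Rightarrow> 'm"
  pa_add  :: "'m \<Rightarrow> 'm \<Rightarrow> 'm"
  pa_neg  :: "'m \<Rightarrow> 'm"
  pa_zero :: "'o \<Rightarrow> 'o \<Rightarrow> 'm"

definition preadditive :: "('o, 'm) pacat \<Rightarrow> bool" where
  "preadditive C \<longleftrightarrow>
     (\<forall>a b c f g. f \<in> pa_hom C a b \<longrightarrow> g \<in> pa_hom C b c \<longrightarrow> pa_comp C g f \<in> pa_hom C a c) \<and>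
     (\<forall>a b c d f g h. f \<in> pa_hom C a b \<longrightarrow> g \<in> pa_hom C b c \<longrightarrow> h \<in> pa_hom C c d \<longrightarrow>
        pa_comp C h (pa_comp C g f) = pa_comp C (pa_comp C h g) f) \<and>
     (\<forall>a. pa_id C a \<in> pa_hom C a a) \<and>
     (\<forall>a b f. f \<in> pa_hom C a b \<longrightarrow> pa_comp C (pa_id C b) f = f \<and> pa_comp C f (pa_id C a) = f) \<and>
     (\<forall>a b f g. f \<in> pa_hom C a b \<longrightarrow> g \<in> pa_hom C a b \<longrightarrow> pa_add C f g \<in> pa_hom C a b) \<and>
     (\<forall>a b f. f \<in> pa_hom C a b \<longrightarrow> pa_neg C f \<in> pa_hom C a b) \<and>
     (\<forall>a b. pa_zero C a b \<in> pa_hom C a b) \<and>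
     (\<forall>a b f g h. f \<in> pa_hom C a b \<longrightarrow> g \<in> pa_hom C a b \<longrightarrow> h \<in> pa_hom C a b \<longrightarrow>
        pa_add C (pa_add C f g) h = pa_add C f (pa_add C g h)) \<and>
     (\<forall>a b f g. f \<in> pa_hom C a b \<longrightarrow> g \<in> pa_hom C a b \<longrightarrow> pa_add C f g = pa_add C g f) \<and>
     (\<forall>a b f. f \<in> pa_hom C a b \<longrightarrow> pa_add C (pa_zero C a b) f = f) \<and>
     (\<forall>a b f. f \<in> pa_hom C a b \<longrightarrow> pa_add C (pa_neg C f) f = pa_zero C a b) \<and>
     (\<forall>a b c f g g'. f \<in> pa_hom C a b \<longrightarrow> g \<in> pa_hom C b c \<longrightarrow> g' \<in> pa_hom C b c \<longrightarrow>
        pa_comp C (pa_add C g g') f = pa_add C (pa_comp C g f) (pa_comp C g' f)) \<and>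
     (\<forall>a b c f f' g. f \<in> pa_hom C a b \<longrightarrow> f' \<in> pa_hom C a b \<longrightarrow> g \<in> pa_hom C b c \<longrightarrow>
        pa_comp C g (pa_add C f f') = pa_add C (pa_comp C g f) (pa_comp C g f'))"

definition lam :: "nat \<Rightarrow> nat \<Rightarrow> (int \<Rightarrow> int) set" where
  "lam m n = {f. mono f \<and> (\<forall>j. f (j + int m + 1) = f j + int n + 1) \<and> f 0 \<ge> 0}"

(* \<epsilon>^n_i : [n-1] \<rightarrow> [n], extended periodically to \<int> *)
definition eps :: "nat \<Rightarrow> nat \<Rightarrow> int \<Rightarrow> int" where
  "eps n i j = (let q = j div int n; r = j mod int n in
      q * (int n + 1) + (if r < int i then r else r + 1))"

(* \<eta>^n_i : [n+1] \<rightarrow> [n], extended periodically to \<int> *)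
definition eta :: "nat \<Rightarrow> nat \<Rightarrow> int \<Rightarrow> int" where
  "eta n i j = (let q = j div (int n + 2); r = j mod (int n + 2) in
      q * (int n + 1) + (if r \<le> int i then r else r - 1))"

definition duplicial :: "('o, 'm) pacat \<Rightarrow> (nat \<Rightarrow> 'o) \<Rightarrow> (nat \<Rightarrow> nat \<Rightarrow> (int \<Rightarrow> int) \<Rightarrow> 'm) \<Rightarrow> bool" where
  "duplicial C Mo Mf \<longleftrightarrow>
     (\<forall>m n f. f \<in> lam m n \<longrightarrow> Mf m n f \<in> pa_hom C (Mo n) (Mo m)) \<and>
     (\<forall>m. Mf m m id = pa_id C (Mo m)) \<and>
     (\<forall>l m n f g. f \<in> lam l m \<longrightarrow> g \<in> lam m n \<longrightarrow>
        Mf l n (g \<circ> f) = pa_comp C (Mf l m f) (Mf m n g))"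

definition sgnm :: "('o, 'm) pacat \<Rightarrow> nat \<Rightarrow> 'm \<Rightarrow> 'm" where
  "sgnm C k x = (if even k then x else pa_neg C x)"

fun ssum :: "('o, 'm) pacat \<Rightarrow> (nat \<Rightarrow> 'm) \<Rightarrow> nat \<Rightarrow> 'm" where
  "ssum C f 0 = f 0"
| "ssum C f (Suc k) = pa_add C (ssum C f k) (sgnm C (Suc k) (f (Suc k)))"

fun psum :: "('o, 'm) pacat \<Rightarrow> (nat \<Rightarrow> 'm) \<Rightarrow> nat \<Rightarrow> 'm" where
  "psum C f 0 = f 0"
| "psum C f (Suc k) = pa_add C (psum C f k) (f (Suc k))"

(* \<partial>_{n,i} = M(\<epsilon>^n_i) : M_n \<rightarrow> M_{n-1}  (n \<ge> 1) *)
definition face :: "(nat \<Rightarrow> nat \<Rightarrow> (int \<Rightarrow> int) \<Rightarrow> 'm) \<Rightarrow> nat \<Rightarrow> nat \<Rightarrow> 'm" where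
  "face Mf n i = Mf (n - 1) n (eps n i)"

definition degen :: "(nat \<Rightarrow> nat \<Rightarrow> (int \<Rightarrow> int) \<Rightarrow> 'm) \<Rightarrow> nat \<Rightarrow> nat \<Rightarrow> 'm" where
  "degen Mf n i = Mf (n + 1) n (eta n i)"

definition bop :: "('o, 'm) pacat \<Rightarrow> (nat \<Rightarrow> nat \<Rightarrow> (int \<Rightarrow> int) \<Rightarrow> 'm) \<Rightarrow> nat \<Rightarrow> 'm" where
  "bop C Mf n = ssum C (face Mf n) n"

definition dop :: "('o, 'm) pacat \<Rightarrow> (nat \<Rightarrow> nat \<Rightarrow> (int \<Rightarrow> int) \<Rightarrow> 'm) \<Rightarrow> nat \<Rightarrow> 'm" where
  "dop C Mf n = ssum C (degen Mf n) (n + 1)"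

definition kappa :: "('o, 'm) pacat \<Rightarrow> (nat \<Rightarrow> nat \<Rightarrow> (int \<Rightarrow> int) \<Rightarrow> 'm) \<Rightarrow> nat \<Rightarrow> 'm" where
  "kappa C Mf n =
     (if n = 0 then pa_comp C (face Mf 1 0) (degen Mf 0 1)
      else sgnm C n (pa_add C (pa_comp C (face Mf (n + 1) 0) (degen Mf n (n + 1)))
                              (pa_neg C (pa_comp C (degen Mf (n - 1) n) (face Mf n 0)))))"

fun kpow :: "('o, 'm) pacat \<Rightarrow> (nat \<Rightarrow> 'o) \<Rightarrow> (nat \<Rightarrow> nat \<Rightarrow> (int \<Rightarrow> int) \<Rightarrow> 'm) \<Rightarrow> nat \<Rightarrow> nat \<Rightarrow> 'm" where
  "kpow C Mo Mf n 0 = pa_id C (Mo n)"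
| "kpow C Mo Mf n (Suc k) = pa_comp C (kappa C Mf n) (kpow C Mo Mf n k)"

definition piop :: "('o, 'm) pacat \<Rightarrow> (nat \<Rightarrow> 'o) \<Rightarrow> (nat \<Rightarrow> nat \<Rightarrow> (int \<Rightarrow> int) \<Rightarrow> 'm) \<Rightarrow> nat \<Rightarrow> 'm" where
  "piop C Mo Mf n = sgnm C n (pa_comp C (face Mf (n + 1) 0)
                      (pa_comp C (kpow C Mo Mf (n + 1) n) (degen Mf n (n + 1))))"

definition connesB :: "('o, 'm) pacat \<Rightarrow> (nat \<Rightarrow> 'o) \<Rightarrow> (nat \<Rightarrow> nat \<Rightarrow> (int \<Rightarrow> int) \<Rightarrow> 'm) \<Rightarrow> nat \<Rightarrow> 'm" where
  "connesB C Mo Mf n = psum C (\<lambda>i. pa_comp C (dop C Mf n) (kpow C Mo Mf n i)) n"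

end

(* A duplicial module is contravariant in the maps eps and eta of Lambda_+, which are periodic
   extensions of maps on a single period; so all simplicial identities between them can be checked
   on one period. We therefore compute in the integral monoid ring of the endomaps of Z, where the
   operators b, d, kappa, B and pi become ring elements, and transport the resulting identities to
   the module along the additive and multiplicative realisation x |-> M(x).

   In the ring, sign-reversing involutions on the expanded products give b b = 0, d d = 0 and
   b d + d b = 1 - kappa. Hence kappa commutes with b and d, and summing over the powers of kappa
   telescopes to b B + B b = 1 - kappa^n + b d kappa^n. The identities kappa^(j+1) s_j = 0 and
   face_0 kappa^k = kappa^k (sum_(i<=k) (-1)^i face_i) show that kappa^n - b d kappa^n is the
   Dwyer-Kan operator pi_n. Finally B B = 0 because d d = 0 and kappa d = d kappa. *)

theory Submission
  imports Defs "HOL-Library.Poly_Mapping" "HOL-Library.Disjoint_Sets" "HOL-Algebra.FiniteProduct"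
begin

section \<open>Morphisms of \<open>\<Lambda>\<^sub>+\<close> as periodic extensions\<close>

definition periodic_ext :: "int \<Rightarrow> int \<Rightarrow> (int \<Rightarrow> int) \<Rightarrow> int \<Rightarrow> int" where
  "periodic_ext p p' g x = (x div p) * p' + g (x mod p)"

lemma periodic_ext_shift:
  "p > 0 \<Longrightarrow> periodic_ext p p' g (q * p + y) = q * p' + periodic_ext p p' g y"
  unfolding periodic_ext_def by (simp add: algebra_simps)

lemma periodic_ext_eval:
  "p > 0 \<Longrightarrow> 0 \<le> y \<Longrightarrow> y \<le> p \<Longrightarrow> periodic_ext p p' g y = (if y = p then p' + g 0 else g y)"
  unfolding periodic_ext_def by auto

lemma periodic_ext_comp:
  assumes "p' > 0"
  shows "periodic_ext p' p'' h \<circ> periodic_ext p p' g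
      = periodic_ext p p'' (periodic_ext p' p'' h \<circ> g)"
proof
  fix x
  show "(periodic_ext p' p'' h \<circ> periodic_ext p p' g) x
      = periodic_ext p p'' (periodic_ext p' p'' h \<circ> g) x"
    using periodic_ext_shift[OF assms, of p'' h "x div p" "g (x mod p)"]
    by (simp add: periodic_ext_def)
qed

lemma periodic_ext_cong:
  "p > 0 \<Longrightarrow> (\<And>r. 0 \<le> r \<Longrightarrow> r < p \<Longrightarrow> g r = h r) \<Longrightarrow> periodic_ext p p' g = periodic_ext p p' h"
  unfolding periodic_ext_def by (auto intro!: ext)

lemma eps_periodic:
  "eps n i = periodic_ext (int n) (int n + 1) (\<lambda>r. if r < int i then r else r + 1)"
  unfolding eps_def periodic_ext_def by (auto simp: Let_def intro!: ext)

lemma eta_periodic: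
  "eta n i = periodic_ext (int n + 2) (int n + 1) (\<lambda>r. if r \<le> int i then r else r - 1)"
  unfolding eta_def periodic_ext_def by (auto simp: Let_def intro!: ext)

lemma eps_comp_eps:
  "1 \<le> n \<Longrightarrow> i < j \<Longrightarrow> j \<le> n + 1 \<Longrightarrow> eps (n + 1) j \<circ> eps n i = eps (n + 1) i \<circ> eps n (j - 1)"
  unfolding eps_periodic by (simp add: periodic_ext_comp algebra_simps)
    (rule periodic_ext_cong; auto simp: periodic_ext_eval)

lemma eta_comp_eps_lt:
  "1 \<le> n \<Longrightarrow> i < j \<Longrightarrow> j \<le> n + 1 \<Longrightarrow> \<not> (i = 0 \<and> j = n + 1) \<Longrightarrow>
    eta n j \<circ> eps (n + 1) i = eps n i \<circ> eta (n - 1) (j - 1)"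
  unfolding eps_periodic eta_periodic
  by (simp add: periodic_ext_comp of_nat_diff algebra_simps)
    (rule periodic_ext_cong; auto simp: periodic_ext_eval)

lemma eta_comp_eps_id:
  "i = j \<or> i = j + 1 \<and> j \<le> n \<Longrightarrow> j \<le> n + 1 \<Longrightarrow> eta n j \<circ> eps (n + 1) i = id"
proof -
  assume "i = j \<or> i = j + 1 \<and> j \<le> n" "j \<le> n + 1"
  then have "eta n j \<circ> eps (n + 1) i = periodic_ext (int n + 1) (int n + 1) id"
    unfolding eps_periodic eta_periodic
    by (simp add: periodic_ext_comp algebra_simps)
      (rule periodic_ext_cong; auto simp: periodic_ext_eval)
  also have "\<dots> = id"
    by (auto simp: periodic_ext_def div_mult_mod_eq intro!: ext)
  finally show ?thesis .
qed

lemma eta_comp_eps_gt: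
  "1 \<le> n \<Longrightarrow> j + 1 < i \<Longrightarrow> i \<le> n + 1 \<Longrightarrow> eta n j \<circ> eps (n + 1) i = eps n (i - 1) \<circ> eta (n - 1) j"
  unfolding eps_periodic eta_periodic
  by (simp add: periodic_ext_comp of_nat_diff algebra_simps)
    (rule periodic_ext_cong; auto simp: periodic_ext_eval)

lemma eta_comp_eta:
  "i \<le> j \<Longrightarrow> j \<le> n + 1 \<Longrightarrow> eta n j \<circ> eta (n + 1) i = eta n i \<circ> eta (n + 1) (j + 1)"
  unfolding eta_periodic
  by (simp add: periodic_ext_comp algebra_simps)
    (rule periodic_ext_cong; auto simp: periodic_ext_eval)

lemma mono_int_stepI:
  fixes f :: "int \<Rightarrow> int"
  assumes "\<And>x. f x \<le> f (x + 1)"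
  shows "mono f"
proof
  fix x y :: int
  assume "x \<le> y"
  then show "f x \<le> f y"
  proof (induction y rule: int_ge_induct)
    case (step y)
    then show ?case using assms[of y] by linarith
  qed simp
qed

lemma periodic_ext_in_lam:
  assumes p: "p = int m + 1" and p': "p' = int n + 1"
    and g_mono: "\<And>r. 0 \<le> r \<Longrightarrow> r + 1 < p \<Longrightarrow> g r \<le> g (r + 1)"
    and g_last: "g (p - 1) \<le> p' + g 0" and g_0: "0 \<le> g 0"
  shows "periodic_ext p p' g \<in> lam m n"
proof -
  have "p > 0" using p by simp
  have step: "periodic_ext p p' g x \<le> periodic_ext p p' g (x + 1)" for x
  proof -
    define r where "r = x mod p"
    have x: "x = (x div p) * p + r" and r: "0 \<le> r" "r < p"
      using \<open>p > 0\<close> by (simp_all add: r_def)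
    have "periodic_ext p p' g r \<le> periodic_ext p p' g (r + 1)"
    proof (cases "r + 1 < p")
      case True
      then show ?thesis using r g_mono[of r] \<open>p > 0\<close> by (simp add: periodic_ext_eval)
    next
      case False
      then have "r = p - 1" using r by simp
      then show ?thesis using r \<open>p > 0\<close> g_last by (simp add: periodic_ext_eval)
    qed
    then show ?thesis
      using periodic_ext_shift[OF \<open>p > 0\<close>, of p' g "x div p" r]
        periodic_ext_shift[OF \<open>p > 0\<close>, of p' g "x div p" "r + 1"]
      by (subst (1 2) x) (simp add: algebra_simps)
  qed
  have "periodic_ext p p' g (j + int m + 1) = periodic_ext p p' g j + int n + 1" for j
    using periodic_ext_shift[OF \<open>p > 0\<close>, of p' g 1 j] p p' by (simp add: algebra_simps)
  moreover have "periodic_ext p p' g 0 \<ge> 0"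
    using \<open>p > 0\<close> g_0 by (simp add: periodic_ext_eval)
  ultimately show ?thesis
    unfolding lam_def using mono_int_stepI[of "periodic_ext p p' g", OF step] by simp
qed

lemma eps_in_lam: "1 \<le> n \<Longrightarrow> i \<le> n \<Longrightarrow> eps n i \<in> lam (n - 1) n"
  unfolding eps_periodic by (rule periodic_ext_in_lam) auto

lemma eta_in_lam: "i \<le> n + 1 \<Longrightarrow> eta n i \<in> lam (n + 1) n"
  unfolding eta_periodic by (rule periodic_ext_in_lam) auto

lemma id_in_lam: "id \<in> lam m m"
  unfolding lam_def by (simp add: mono_def)

lemma comp_in_lam:
  assumes "f \<in> lam l m" "g \<in> lam m n"
  shows "g \<circ> f \<in> lam l n"
proof -
  have "mono (g \<circ> f)" "0 \<le> g (f 0)"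
    using assms unfolding lam_def mono_def by (auto intro: order_trans)
  then show ?thesis
    using assms unfolding lam_def by simp
qed

section \<open>The integral monoid ring of the endomaps of \<open>\<int>\<close>\<close>

text \<open>A copy of \<open>int \<Rightarrow> int\<close> whose monoid operation, written \<open>+\<close> because
  \<open>Poly_Mapping\<close> multiplies keys by addition, is composition in diagrammatic order, matching the
  contravariance of a duplicial module.\<close>

typedef endo = "UNIV :: (int \<Rightarrow> int) set" by simp

instantiation endo :: monoid_add
begin

definition zero_endo :: endo where "0 = Abs_endo id"

definition plus_endo :: "endo \<Rightarrow> endo \<Rightarrow> endo" where
  "a + b = Abs_endo (Rep_endo b \<circ> Rep_endo a)"

instance
  by standard (auto simp: zero_endo_def plus_endo_def Abs_endo_inverse Rep_endo_inverse comp_assoc)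

end

type_synonym zendo = "endo \<Rightarrow>\<^sub>0 int"

definition of_map :: "(int \<Rightarrow> int) \<Rightarrow> zendo" where
  "of_map f = frag_of (Abs_endo f)"

lemma of_map_mult: "of_map f * of_map g = of_map (g \<circ> f)"
  by (simp add: of_map_def mult_single plus_endo_def Abs_endo_inverse)

lemma of_map_id: "of_map id = 1"
  by (simp add: of_map_def zero_endo_def flip: single_one)

definition fR :: "nat \<Rightarrow> nat \<Rightarrow> zendo" where "fR n i = of_map (eps n i)"
definition sR :: "nat \<Rightarrow> nat \<Rightarrow> zendo" where "sR n i = of_map (eta n i)"

lemma fR_fR:
  "1 \<le> n \<Longrightarrow> i < j \<Longrightarrow> j \<le> n + 1 \<Longrightarrow> fR n i * fR (n + 1) j = fR n (j - 1) * fR (n + 1) i"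
  unfolding fR_def of_map_mult using eps_comp_eps[of n i j] by simp

lemma fR_sR_lt:
  "1 \<le> n \<Longrightarrow> i < j \<Longrightarrow> j \<le> n + 1 \<Longrightarrow> \<not> (i = 0 \<and> j = n + 1) \<Longrightarrow>
    fR (n + 1) i * sR n j = sR (n - 1) (j - 1) * fR n i"
  unfolding fR_def sR_def of_map_mult using eta_comp_eps_lt[of n i j] by simp

lemma fR_sR_id:
  "i = j \<or> i = j + 1 \<and> j \<le> n \<Longrightarrow> j \<le> n + 1 \<Longrightarrow> fR (n + 1) i * sR n j = 1"
  unfolding fR_def sR_def of_map_mult using eta_comp_eps_id[of i j n] by (simp add: of_map_id)

lemma fR_sR_gt:
  "1 \<le> n \<Longrightarrow> j + 1 < i \<Longrightarrow> i \<le> n + 1 \<Longrightarrow> fR (n + 1) i * sR n j = sR (n - 1) j * fR n (i - 1)"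
  unfolding fR_def sR_def of_map_mult using eta_comp_eps_gt[of n j i] by simp

lemma sR_sR:
  "i \<le> j \<Longrightarrow> j \<le> n + 1 \<Longrightarrow> sR (n + 1) i * sR n j = sR (n + 1) (j + 1) * sR n i"
  unfolding sR_def of_map_mult using eta_comp_eta[of i j n] by simp

lemma neg_one_power_mult_self: "(- 1) ^ i * (- 1) ^ i = (1 :: 'a :: ring_1)"
  by (simp add: minus_one_power_iff)

lemma neg_one_power_left_commute: "x * ((- 1) ^ i * y) = (- 1) ^ i * (x * y :: 'a :: ring_1)"
  by (simp add: minus_one_power_iff)

lemma alternating_sum_mult:
  fixes X Y :: "nat \<Rightarrow> 'a :: ring_1"
  shows "(\<Sum>i\<in>I. (- 1) ^ i * X i) * (\<Sum>j\<in>J. (- 1) ^ j * Y j)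
       = (\<Sum>(i, j)\<in>I \<times> J. (- 1) ^ (i + j) * (X i * Y j))"
proof -
  have "(- 1) ^ i * X i * ((- 1) ^ j * Y j) = (- 1) ^ (i + j) * (X i * Y j)" for i j
    by (simp add: power_add mult.assoc minus_one_power_iff)
  then show ?thesis
    by (simp add: sum_product sum.cartesian_product)
qed

section \<open>The Hochschild, Karoubi and Connes operators in the ring\<close>

definition bR :: "nat \<Rightarrow> zendo" where "bR n = (\<Sum>i\<le>n. (- 1) ^ i * fR n i)"
definition dR :: "nat \<Rightarrow> zendo" where "dR n = (\<Sum>j\<le>n + 1. (- 1) ^ j * sR n j)"
definition tR :: "nat \<Rightarrow> zendo" where "tR n = fR (n + 1) 0 * sR n (n + 1)"
definition kR :: "nat \<Rightarrow> zendo" where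
  "kR n = (if n = 0 then tR 0 else (- 1) ^ n * (tR n - sR (n - 1) n * fR n 0))"

lemma bR_bR:
  assumes "1 \<le> n"
  shows "bR n * bR (n + 1) = 0"
proof -
  let ?f = "\<lambda>(i, j). (- 1) ^ (i + j) * (fR n i * fR (n + 1) j)"
  have "bR n * bR (n + 1) = (\<Sum>(i, j)\<in>{..n} \<times> {..n + 1}. (- 1) ^ (i + j) * (fR n i * fR (n + 1) j))"
    unfolding bR_def by (rule alternating_sum_mult)
  also have "\<dots> = 0"
  proof (rule sum_involution_eq_0[where h = "\<lambda>(i, j). if i < j then (j - 1, i) else (j, i + 1)"])
    fix x assume x: "x \<in> {..n} \<times> {..n + 1}"
    then obtain i j where ij: "x = (i, j)" "i \<le> n" "j \<le> n + 1" by auto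
    show "?f ((\<lambda>(i, j). if i < j then (j - 1, i) else (j, i + 1)) x) + ?f x = 0"
    proof (cases "i < j")
      case True
      then obtain j' where "j = Suc j'" by (cases j) auto
      then show ?thesis using ij True fR_fR[OF assms True ij(3)] by (simp add: add.commute)
    next
      case False
      then show ?thesis using ij fR_fR[OF assms, of j "i + 1"] by (simp add: add.commute)
    qed
  qed (auto split: if_splits)
  finally show ?thesis .
qed

lemma dR_dR: "dR (n + 1) * dR n = 0"
proof -
  let ?f = "\<lambda>(i, j). (- 1) ^ (i + j) * (sR (n + 1) i * sR n j)"
  have "dR (n + 1) * dR n
      = (\<Sum>(i, j)\<in>{..n + 1 + 1} \<times> {..n + 1}. (- 1) ^ (i + j) * (sR (n + 1) i * sR n j))"
    unfolding dR_def by (rule alternating_sum_mult)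
  also have "\<dots> = 0"
  proof (rule sum_involution_eq_0[where h = "\<lambda>(i, j). if i \<le> j then (j + 1, i) else (j, i - 1)"])
    fix x assume x: "x \<in> {..n + 1 + 1} \<times> {..n + 1}"
    then obtain i j where ij: "x = (i, j)" "i \<le> n + 2" "j \<le> n + 1" by auto
    show "?f ((\<lambda>(i, j). if i \<le> j then (j + 1, i) else (j, i - 1)) x) + ?f x = 0"
    proof (cases "i \<le> j")
      case True
      then show ?thesis using ij sR_sR[OF True ij(3)] by (simp add: add.commute)
    next
      case False
      then obtain i' where "i = Suc i'" by (cases i) auto
      then show ?thesis using ij False sR_sR[of j i' n] by (simp add: add.commute)
    qed
  qed (auto split: if_splits)
  finally show ?thesis .
qed

lemma bR_dR_0: "bR 1 * dR 0 = 1 - kR 0"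
proof -
  have "fR 1 0 * sR 0 0 = 1" "fR 1 1 * sR 0 0 = 1" "fR 1 1 * sR 0 1 = 1"
    using fR_sR_id[of 0 0 0] fR_sR_id[of 1 0 0] fR_sR_id[of 1 1 0] by simp_all
  then show ?thesis
    unfolding bR_def dR_def kR_def tR_def by (simp add: atMost_Suc ring_distribs)
qed

text \<open>The product expansion of \<open>b\<^sub>n\<^sub>+\<^sub>1 d\<^sub>n + d\<^sub>n\<^sub>-\<^sub>1 b\<^sub>n\<close> has the terms \<open>bd_term n\<close>
  indexed by \<open>bd_index n\<close>. The simplicial identities cancel them in pairs along the involution
  \<open>bd_match\<close>, leaving the three terms of \<open>bd_unmatched n\<close>, which sum to \<open>1 - \<kappa>\<^sub>n\<close>.\<close>

definition bd_index :: "nat \<Rightarrow> (nat \<times> nat + nat \<times> nat) set" where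
  "bd_index n = {..n + 1} \<times> {..n + 1} <+> {..n} \<times> {..n}"

definition bd_term :: "nat \<Rightarrow> nat \<times> nat + nat \<times> nat \<Rightarrow> zendo" where
  "bd_term n = case_sum (\<lambda>(i, j). (- 1) ^ (i + j) * (fR (n + 1) i * sR n j))
                        (\<lambda>(j, i). (- 1) ^ (j + i) * (sR (n - 1) j * fR n i))"

definition bd_unmatched :: "nat \<Rightarrow> (nat \<times> nat + nat \<times> nat) set" where
  "bd_unmatched n = {Inl (n + 1, n + 1), Inl (0, n + 1), Inr (n, 0)}"

definition bd_match :: "nat \<times> nat + nat \<times> nat \<Rightarrow> nat \<times> nat + nat \<times> nat" where
  "bd_match = case_sum
     (\<lambda>(i, j). if i < j then Inr (j - 1, i) else if j + 1 < i then Inr (j, i - 1)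
               else if i = j then Inl (i + 1, j) else Inl (j, j))
     (\<lambda>(j, i). if i \<le> j then Inl (i, j + 1) else Inl (i + 1, j))"

lemma bd_match_involution:
  assumes "x \<in> bd_index n - bd_unmatched n"
  shows "bd_match x \<in> bd_index n - bd_unmatched n" "bd_match (bd_match x) = x" "bd_match x \<noteq> x"
  using assms by (auto simp: bd_index_def bd_unmatched_def bd_match_def split: if_splits)

lemma bd_term_match_Inl:
  assumes n: "1 \<le> n" and x: "Inl (i, j) \<in> bd_index n - bd_unmatched n"
  shows "bd_term n (bd_match (Inl (i, j))) + bd_term n (Inl (i, j)) = 0"
proof -
  have ij: "i \<le> n + 1" "j \<le> n + 1" "\<not> (i = 0 \<and> j = n + 1)"
    using x by (auto simp: bd_index_def bd_unmatched_def)
  consider "i < j" | "j + 1 < i" | "i = j" | "i = j + 1" by linarith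
  then show ?thesis
  proof cases
    case 1
    then obtain j' where "j = Suc j'" by (cases j) auto
    then show ?thesis using 1 fR_sR_lt[OF n 1 ij(2,3)]
      by (simp add: bd_term_def bd_match_def add.commute)
  next
    case 2
    then obtain i' where "i = Suc i'" by (cases i) auto
    then show ?thesis using 2 fR_sR_gt[OF n 2 ij(1)]
      by (simp add: bd_term_def bd_match_def add.commute)
  next
    case 3
    then show ?thesis using x fR_sR_id[of i j n] fR_sR_id[of "i + 1" j n]
      by (auto simp: bd_term_def bd_match_def bd_index_def bd_unmatched_def)
  next
    case 4
    then show ?thesis using ij fR_sR_id[of i j n] fR_sR_id[of j j n]
      by (simp add: bd_term_def bd_match_def)
  qed
qed

lemma bd_term_match_Inr:
  assumes n: "1 \<le> n" and x: "Inr (j, i) \<in> bd_index n - bd_unmatched n"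
  shows "bd_term n (bd_match (Inr (j, i))) + bd_term n (Inr (j, i)) = 0"
proof (cases "i \<le> j")
  case True
  have "fR (n + 1) i * sR n (j + 1) = sR (n - 1) j * fR n i"
    using fR_sR_lt[OF n, of i "j + 1"] True x by (auto simp: bd_index_def bd_unmatched_def)
  then show ?thesis
    using True by (simp add: bd_term_def bd_match_def add.commute)
next
  case False
  then show ?thesis
    using x fR_sR_gt[OF n, of j "i + 1"]
    by (auto simp: bd_term_def bd_match_def bd_index_def add.commute)
qed

lemma bd_term_unmatched: "1 \<le> n \<Longrightarrow> sum (bd_term n) (bd_unmatched n) = 1 - kR n"
  using fR_sR_id[of "n + 1" "n + 1" n]
  by (simp add: bd_unmatched_def bd_term_def kR_def tR_def algebra_simps)

lemma bR_dR:
  assumes n: "1 \<le> n"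
  shows "bR (n + 1) * dR n + dR (n - 1) * bR n = 1 - kR n"
proof -
  have "bR (n + 1) * dR n
      = (\<Sum>(i, j)\<in>{..n + 1} \<times> {..n + 1}. (- 1) ^ (i + j) * (fR (n + 1) i * sR n j))"
    unfolding bR_def dR_def by (rule alternating_sum_mult)
  moreover have "dR (n - 1) * bR n
      = (\<Sum>(j, i)\<in>{..n - 1 + 1} \<times> {..n}. (- 1) ^ (j + i) * (sR (n - 1) j * fR n i))"
    unfolding bR_def dR_def by (rule alternating_sum_mult)
  ultimately have "bR (n + 1) * dR n + dR (n - 1) * bR n = sum (bd_term n) (bd_index n)"
    using n by (simp add: bd_term_def bd_index_def sum.Plus comp_def)
  also have "\<dots> = sum (bd_term n) (bd_index n - bd_unmatched n) + sum (bd_term n) (bd_unmatched n)"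
    by (rule sum.subset_diff) (auto simp: bd_index_def bd_unmatched_def)
  also have "sum (bd_term n) (bd_index n - bd_unmatched n) = 0"
  proof (rule sum_involution_eq_0[where h = bd_match])
    fix x
    assume "x \<in> bd_index n - bd_unmatched n"
    then show "bd_term n (bd_match x) + bd_term n x = 0"
      using bd_term_match_Inl[OF n] bd_term_match_Inr[OF n] by (cases x) auto
  qed (use bd_match_involution in auto)
  finally show ?thesis
    using bd_term_unmatched[OF n] by simp
qed

lemma kR_dR: "kR (n + 1) * dR n = dR n * kR n"
proof -
  have "(1 - kR (n + 1)) * dR n = (bR (n + 2) * dR (n + 1) + dR n * bR (n + 1)) * dR n"
    using bR_dR[of "n + 1"] by simp
  also have "\<dots> = dR n * bR (n + 1) * dR n"
    using dR_dR[of n] by (simp add: distrib_right mult.assoc)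
  finally have left: "(1 - kR (n + 1)) * dR n = dR n * bR (n + 1) * dR n" .
  have right: "dR n * (1 - kR n) = dR n * bR (n + 1) * dR n"
  proof (cases n)
    case 0
    then show ?thesis using bR_dR_0 by (simp add: mult.assoc)
  next
    case (Suc m)
    then have "dR n * (1 - kR n) = dR n * (bR (n + 1) * dR n + dR m * bR n)"
      using bR_dR[of n] by simp
    also have "\<dots> = dR n * bR (n + 1) * dR n"
      using dR_dR[of m] Suc by (simp add: distrib_left flip: mult.assoc)
    finally show ?thesis .
  qed
  from left right have "(1 - kR (n + 1)) * dR n = dR n * (1 - kR n)" by simp
  then show ?thesis by (simp add: left_diff_distrib right_diff_distrib)
qed

lemma bR_kR: "bR (n + 1) * kR (n + 1) = kR n * bR (n + 1)"
proof -
  have "bR (n + 1) * (1 - kR (n + 1)) = bR (n + 1) * (bR (n + 2) * dR (n + 1) + dR n * bR (n + 1))"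
    using bR_dR[of "n + 1"] by simp
  also have "\<dots> = bR (n + 1) * dR n * bR (n + 1)"
    using bR_bR[of "n + 1"] by (simp add: distrib_left flip: mult.assoc)
  finally have left: "bR (n + 1) * (1 - kR (n + 1)) = bR (n + 1) * dR n * bR (n + 1)" .
  have right: "(1 - kR n) * bR (n + 1) = bR (n + 1) * dR n * bR (n + 1)"
  proof (cases n)
    case 0
    then show ?thesis using bR_dR_0 by simp
  next
    case (Suc m)
    then have "(1 - kR n) * bR (n + 1) = (bR (n + 1) * dR n + dR m * bR n) * bR (n + 1)"
      using bR_dR[of n] by simp
    also have "\<dots> = bR (n + 1) * dR n * bR (n + 1)"
      using bR_bR[of n] Suc by (simp add: distrib_right mult.assoc)
    finally show ?thesis .
  qed
  from left right have "bR (n + 1) * (1 - kR (n + 1)) = (1 - kR n) * bR (n + 1)" by simp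
  then show ?thesis by (simp add: left_diff_distrib right_diff_distrib)
qed

lemma kR_pow_dR: "kR (n + 1) ^ k * dR n = dR n * kR n ^ k"
proof (induction k)
  case (Suc k)
  have "kR (n + 1) ^ Suc k * dR n = kR (n + 1) * (kR (n + 1) ^ k * dR n)"
    by (simp add: mult.assoc)
  also have "\<dots> = dR n * kR n ^ Suc k"
    by (simp only: Suc.IH kR_dR flip: mult.assoc) (simp add: mult.assoc)
  finally show ?case .
qed simp

lemma bR_kR_pow: "bR (n + 1) * kR (n + 1) ^ k = kR n ^ k * bR (n + 1)"
proof (induction k)
  case (Suc k)
  have "bR (n + 1) * kR (n + 1) ^ Suc k = bR (n + 1) * kR (n + 1) ^ k * kR (n + 1)"
    by (simp only: power_Suc2 mult.assoc)
  also have "\<dots> = kR n ^ Suc k * bR (n + 1)"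
    by (simp only: Suc.IH mult.assoc bR_kR) (simp only: power_Suc2 mult.assoc)
  finally show ?case .
qed simp

lemma mult_assoc_subst: "a * b = c * d \<Longrightarrow> a * (b * z) = c * (d * (z :: 'a :: semigroup_mult))"
  by (metis mult.assoc)

lemma kR_Suc:
  "kR (n + 1) = (- 1) ^ (n + 1) * (fR (n + 2) 0 * sR (n + 1) (n + 2) - sR n (n + 1) * fR (n + 1) 0)"
  by (simp add: kR_def tR_def)

lemma fR_0_tR_Suc: "fR (n + 1) 0 * tR (n + 1) = tR n * fR (n + 1) 1"
proof -
  have "fR (n + 1) 0 * (fR (n + 2) 0 * sR (n + 1) (n + 2))
      = fR (n + 1) 0 * (fR (n + 2) 1 * sR (n + 1) (n + 2))"
    by (rule mult_assoc_subst) (use fR_fR[of "n + 1" 0 1] in simp)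
  also have "fR (n + 2) 1 * sR (n + 1) (n + 2) = sR n (n + 1) * fR (n + 1) 1"
    using fR_sR_lt[of "n + 1" 1 "n + 2"] by simp
  finally show ?thesis by (simp add: tR_def mult.assoc)
qed

lemma fR_0_kR: "fR (n + 1) 0 * kR (n + 1) = kR n * (fR (n + 1) 0 - fR (n + 1) 1)"
proof -
  have "fR (n + 1) 0 * kR (n + 1)
      = (- 1) ^ (n + 1) * (tR n * fR (n + 1) 1 - tR n * fR (n + 1) 0)"
    using fR_0_tR_Suc[of n] kR_Suc[of n]
    by (simp add: right_diff_distrib neg_one_power_left_commute tR_def mult.assoc)
  also have "\<dots> = (- 1) ^ n * (tR n * fR (n + 1) 0 - tR n * fR (n + 1) 1)"
    by (simp add: algebra_simps)
  also have "\<dots> = kR n * (fR (n + 1) 0 - fR (n + 1) 1)"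
  proof (cases n)
    case (Suc m)
    have "sR m n * fR n 0 * (fR (n + 1) 0 - fR (n + 1) 1) = 0"
      using fR_fR[of n 0 1] Suc by (simp add: mult.assoc right_diff_distrib)
    then show ?thesis
      using Suc by (simp add: kR_def left_diff_distrib right_diff_distrib mult.assoc)
  qed (simp add: kR_def right_diff_distrib)
  finally show ?thesis .
qed

lemma fR_kR:
  assumes i: "1 \<le> i" "i \<le> n"
  shows "fR (n + 1) i * kR (n + 1) = - (kR n * fR (n + 1) (i + 1))"
proof -
  have "fR (n + 1) i * (fR (n + 2) 0 * sR (n + 1) (n + 2))
      = fR (n + 1) 0 * (fR (n + 2) (i + 1) * sR (n + 1) (n + 2))"
    by (rule mult_assoc_subst) (use fR_fR[of "n + 1" 0 "i + 1"] i in simp)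
  also have "fR (n + 2) (i + 1) * sR (n + 1) (n + 2) = sR n (n + 1) * fR (n + 1) (i + 1)"
    using fR_sR_lt[of "n + 1" "i + 1" "n + 2"] i by simp
  finally have t: "fR (n + 1) i * (fR (n + 2) 0 * sR (n + 1) (n + 2)) = tR n * fR (n + 1) (i + 1)"
    by (simp add: tR_def mult.assoc)
  have "fR (n + 1) i * (sR n (n + 1) * fR (n + 1) 0) = sR (n - 1) n * (fR n i * fR (n + 1) 0)"
    by (rule mult_assoc_subst) (use fR_sR_lt[of n i "n + 1"] i in simp)
  also have "fR n i * fR (n + 1) 0 = fR n 0 * fR (n + 1) (i + 1)"
    using fR_fR[of n 0 "i + 1"] i by simp
  finally have s: "fR (n + 1) i * (sR n (n + 1) * fR (n + 1) 0)
      = sR (n - 1) n * fR n 0 * fR (n + 1) (i + 1)"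
    by (simp add: mult.assoc)
  show ?thesis
    using t s kR_Suc[of n] i
    by (simp add: kR_def right_diff_distrib left_diff_distrib neg_one_power_left_commute mult.assoc)
qed

lemma alternating_faces_kR:
  "k \<le> n \<Longrightarrow> (\<Sum>i\<le>k. (- 1) ^ i * fR (n + 1) i) * kR (n + 1)
      = kR n * (\<Sum>i\<le>k + 1. (- 1) ^ i * fR (n + 1) i)"
proof (induction k)
  case 0
  then show ?case using fR_0_kR[of n] by (simp add: right_diff_distrib)
next
  case (Suc k)
  then show ?case
    using fR_kR[of "Suc k" n]
    by (simp add: algebra_simps neg_one_power_left_commute)
qed

lemma fR_0_kR_pow:
  "k \<le> n \<Longrightarrow> fR (n + 1) 0 * kR (n + 1) ^ k = kR n ^ k * (\<Sum>i\<le>k. (- 1) ^ i * fR (n + 1) i)"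
proof (induction k)
  case (Suc k)
  have "fR (n + 1) 0 * kR (n + 1) ^ Suc k = fR (n + 1) 0 * kR (n + 1) ^ k * kR (n + 1)"
    by (simp only: power_Suc2 mult.assoc)
  also have "\<dots> = kR n ^ k * ((\<Sum>i\<le>k. (- 1) ^ i * fR (n + 1) i) * kR (n + 1))"
    using Suc by (simp add: mult.assoc)
  also have "\<dots> = kR n ^ Suc k * (\<Sum>i\<le>Suc k. (- 1) ^ i * fR (n + 1) i)"
    using alternating_faces_kR[of k n] Suc.prems by (simp only: power_Suc2 mult.assoc) simp
  finally show ?case .
qed simp

lemma kR_sR_0: "kR (m + 1) * sR m 0 = 0"
proof -
  have "fR (m + 2) 0 * (sR (m + 1) (m + 2) * sR m 0) = fR (m + 2) 0 * (sR (m + 1) 0 * sR m (m + 1))"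
    using sR_sR[of 0 "m + 1" m] by simp
  also have "\<dots> = sR m (m + 1)"
    using fR_sR_id[of 0 0 "m + 1"] by (simp flip: mult.assoc)
  finally have "fR (m + 2) 0 * (sR (m + 1) (m + 2) * sR m 0) = sR m (m + 1)" .
  moreover have "sR m (m + 1) * (fR (m + 1) 0 * sR m 0) = sR m (m + 1)"
    using fR_sR_id[of 0 0 m] by simp
  ultimately show ?thesis
    using kR_Suc[of m] by (simp add: mult.assoc left_diff_distrib)
qed

lemma kR_sR:
  assumes j: "1 \<le> j" "j \<le> m"
  shows "kR (m + 1) * sR m j = - (sR m (j - 1) * kR m)"
proof -
  have "fR (m + 2) 0 * (sR (m + 1) (m + 2) * sR m j) = fR (m + 2) 0 * (sR (m + 1) j * sR m (m + 1))"
    using sR_sR[of j "m + 1" m] j by simp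
  also have "\<dots> = sR m (j - 1) * (fR (m + 1) 0 * sR m (m + 1))"
    by (rule mult_assoc_subst) (use fR_sR_lt[of "m + 1" 0 j] j in simp)
  finally have t: "fR (m + 2) 0 * (sR (m + 1) (m + 2) * sR m j) = sR m (j - 1) * tR m"
    by (simp add: tR_def)
  have "sR m (m + 1) * (fR (m + 1) 0 * sR m j) = sR m (m + 1) * (sR (m - 1) (j - 1) * fR m 0)"
    using fR_sR_lt[of m 0 j] j by simp
  also have "\<dots> = sR m (j - 1) * (sR (m - 1) m * fR m 0)"
    by (rule mult_assoc_subst) (use sR_sR[of "j - 1" m "m - 1"] j in simp)
  finally have s: "sR m (m + 1) * (fR (m + 1) 0 * sR m j)
      = sR m (j - 1) * (sR (m - 1) m * fR m 0)" .
  show ?thesis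
    using t s kR_Suc[of m] j
    by (simp add: kR_def mult.assoc left_diff_distrib right_diff_distrib neg_one_power_left_commute)
qed

lemma kR_pow_sR: "j \<le> m \<Longrightarrow> kR (m + 1) ^ (j + 1) * sR m j = 0"
proof (induction j)
  case 0
  then show ?case using kR_sR_0[of m] by simp
next
  case (Suc j)
  have "kR (m + 1) ^ (Suc j + 1) * sR m (Suc j)
      = kR (m + 1) ^ (j + 1) * (kR (m + 1) * sR m (Suc j))"
    by (simp only: add_Suc power_Suc2 mult.assoc)
  also have "\<dots> = - (kR (m + 1) ^ (j + 1) * sR m j * kR m)"
    using kR_sR[of "Suc j" m] Suc.prems by (simp add: mult.assoc)
  finally show ?case using Suc by simp
qed

definition dR' :: "nat \<Rightarrow> zendo" where "dR' n = (\<Sum>j\<le>n. (- 1) ^ j * sR n j)"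

lemma kR_pow_dR': "kR (m + 1) ^ (m + 1) * dR' m = 0"
proof -
  have "kR (m + 1) ^ (m + 1) * sR m j = 0" if "j \<le> m" for j
  proof -
    have "kR (m + 1) ^ (m + 1) = kR (m + 1) ^ (m - j) * kR (m + 1) ^ (j + 1)"
      using that by (simp only: power_add[symmetric]) simp
    then show ?thesis using kR_pow_sR[OF that] by (simp add: mult.assoc)
  qed
  then show ?thesis
    unfolding dR'_def by (simp add: sum_distrib_left neg_one_power_left_commute)
qed

lemma dR'_eq: "dR' n = dR n - (- 1) ^ (n + 1) * sR n (n + 1)"
  by (simp add: dR_def dR'_def)

lemma bR_sR_commutator:
  assumes n: "1 \<le> n"
  shows "bR (n + 1) * sR n (n + 1) - sR (n - 1) n * bR n
      = tR n + (- 1) ^ (n + 1) - sR (n - 1) n * fR n 0"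
proof -
  have inner: "(\<Sum>i<n. (- 1) ^ Suc i * (fR (n + 1) (Suc i) * sR n (n + 1)))
      = (\<Sum>i<n. sR (n - 1) n * ((- 1) ^ Suc i * fR n (Suc i)))"
    using fR_sR_lt[OF n, of "Suc _" "n + 1"]
    by (intro sum.cong) (simp_all add: neg_one_power_left_commute)
  have "bR (n + 1) * sR n (n + 1)
      = tR n + (\<Sum>i<n. (- 1) ^ Suc i * (fR (n + 1) (Suc i) * sR n (n + 1))) + (- 1) ^ (n + 1)"
    unfolding bR_def sum_distrib_right using fR_sR_id[of "n + 1" "n + 1" n]
    by (simp add: tR_def sum.atMost_shift mult.assoc)
  moreover have "sR (n - 1) n * bR n
      = sR (n - 1) n * fR n 0 + (\<Sum>i<n. sR (n - 1) n * ((- 1) ^ Suc i * fR n (Suc i)))"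
    unfolding bR_def sum_distrib_left by (simp add: sum.atMost_shift)
  ultimately show ?thesis
    using inner by simp
qed

lemma bR_dR'_anticommute:
  assumes n: "1 \<le> n"
  shows "bR (n + 1) * dR' n + dR' (n - 1) * bR n = 0"
proof -
  have "bR (n + 1) * dR' n + dR' (n - 1) * bR n
      = (bR (n + 1) * dR n + dR (n - 1) * bR n)
        - (- 1) ^ (n + 1) * (bR (n + 1) * sR n (n + 1) - sR (n - 1) n * bR n)"
    unfolding dR'_eq using n by (simp add: algebra_simps neg_one_power_left_commute)
  also have "\<dots> = 0"
    unfolding bR_dR[OF n] bR_sR_commutator[OF n] using n
    by (simp add: kR_def algebra_simps neg_one_power_mult_self)
  finally show ?thesis .
qed

definition BR :: "nat \<Rightarrow> zendo" where "BR n = (\<Sum>i\<le>n. dR n * kR n ^ i)"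

definition piR :: "nat \<Rightarrow> zendo" where
  "piR n = (- 1) ^ n * (fR (n + 1) 0 * (kR (n + 1) ^ n * sR n (n + 1)))"

lemma piR_eq_kR_pow: "piR n = kR n ^ n + (- 1) ^ n * (kR n ^ n * (bR (n + 1) * sR n (n + 1)))"
proof -
  have faces: "(\<Sum>i\<le>n. (- 1) ^ i * fR (n + 1) i) = bR (n + 1) - (- 1) ^ (n + 1) * fR (n + 1) (n + 1)"
    by (simp add: bR_def)
  have "fR (n + 1) 0 * (kR (n + 1) ^ n * sR n (n + 1))
      = kR n ^ n * (\<Sum>i\<le>n. (- 1) ^ i * fR (n + 1) i) * sR n (n + 1)"
    by (simp only: fR_0_kR_pow[OF order_refl] flip: mult.assoc)
  also have "\<dots> = kR n ^ n * (bR (n + 1) * sR n (n + 1)) + (- 1) ^ n * kR n ^ n"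
    unfolding faces using fR_sR_id[of "n + 1" "n + 1" n]
    by (simp add: algebra_simps neg_one_power_left_commute)
  finally have "piR n
      = (- 1) ^ n * (kR n ^ n * (bR (n + 1) * sR n (n + 1))) + ((- 1) ^ n * (- 1) ^ n) * kR n ^ n"
    by (simp add: piR_def distrib_left mult.assoc)
  then show ?thesis
    by (simp add: neg_one_power_mult_self)
qed

lemma bR_dR_kR_pow:
  assumes n: "1 \<le> n"
  shows "bR (n + 1) * dR n * kR n ^ n = (- 1) ^ (n + 1) * (kR n ^ n * (bR (n + 1) * sR n (n + 1)))"
proof -
  have "bR (n + 1) * dR' n = - (dR' (n - 1) * bR n)"
    using bR_dR'_anticommute[OF n] by (simp add: eq_neg_iff_add_eq_0)
  then have "kR n ^ n * (bR (n + 1) * dR' n) = - (kR n ^ n * dR' (n - 1) * bR n)"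
    by (simp add: mult.assoc)
  also have "kR n ^ n * dR' (n - 1) = 0"
    using kR_pow_dR'[of "n - 1"] n by simp
  finally have vanish: "kR n ^ n * (bR (n + 1) * dR' n) = 0" by simp
  have "bR (n + 1) * dR n * kR n ^ n = bR (n + 1) * kR (n + 1) ^ n * dR n"
    by (simp only: mult.assoc kR_pow_dR)
  also have "\<dots> = kR n ^ n * (bR (n + 1) * dR n)"
    by (simp only: bR_kR_pow mult.assoc)
  also have "\<dots> = kR n ^ n * (bR (n + 1) * dR' n)
      + (- 1) ^ (n + 1) * (kR n ^ n * (bR (n + 1) * sR n (n + 1)))"
    unfolding dR'_eq by (simp add: distrib_left right_diff_distrib neg_one_power_left_commute)
  finally show ?thesis using vanish by simp
qed

lemma piR_eq:
  assumes "1 \<le> n"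
  shows "piR n = kR n ^ n - bR (n + 1) * dR n * kR n ^ n"
  using piR_eq_kR_pow[of n] bR_dR_kR_pow[OF assms] by simp

lemma bR_BR_0: "bR 1 * BR 0 = 1 - piR 0"
  using bR_dR_0 by (simp add: BR_def piR_def kR_def tR_def)

lemma bR_BR_plus_BR_bR: "bR (n + 2) * BR (n + 1) + BR n * bR (n + 1) = 1 - piR (n + 1)"
proof -
  let ?k = "kR (n + 1)"
  let ?bd = "\<lambda>i. bR (n + 2) * dR (n + 1) * ?k ^ i" and ?db = "\<lambda>i. dR n * bR (n + 1) * ?k ^ i"
  have "BR n * bR (n + 1) = (\<Sum>i\<le>n. ?db i)"
    unfolding BR_def sum_distrib_right by (simp only: mult.assoc bR_kR_pow)
  moreover have "bR (n + 2) * BR (n + 1) = (\<Sum>i\<le>n. ?bd i) + ?bd (n + 1)"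
    unfolding BR_def sum_distrib_left by (simp add: mult.assoc)
  ultimately have "bR (n + 2) * BR (n + 1) + BR n * bR (n + 1)
      = (\<Sum>i\<le>n. ?bd i + ?db i) + ?bd (n + 1)"
    by (simp add: sum.distrib add_ac)
  also have "(\<Sum>i\<le>n. ?bd i + ?db i) = (\<Sum>i<n + 1. ?k ^ i - ?k ^ Suc i)"
    using bR_dR[of "n + 1"]
    by (simp add: lessThan_Suc_atMost left_diff_distrib flip: distrib_right)
  also have "\<dots> = 1 - ?k ^ (n + 1)"
    by (simp only: sum_lessThan_telescope') simp
  finally have "bR (n + 2) * BR (n + 1) + BR n * bR (n + 1) = 1 - ?k ^ (n + 1) + ?bd (n + 1)" .
  moreover have "piR (n + 1) = ?k ^ (n + 1) - ?bd (n + 1)"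
    using piR_eq[of "n + 1"] by simp
  ultimately show ?thesis by (simp only: diff_diff_eq2 diff_add_eq)
qed

lemma BR_BR: "BR (n + 1) * BR n = 0"
proof -
  have "dR (n + 1) * kR (n + 1) ^ i * BR n = 0" for i
  proof -
    have "dR (n + 1) * kR (n + 1) ^ i * BR n
        = (\<Sum>j\<le>n. dR (n + 1) * (kR (n + 1) ^ i * dR n) * kR n ^ j)"
      unfolding BR_def sum_distrib_left by (simp only: mult.assoc)
    also have "\<dots> = (\<Sum>j\<le>n. (dR (n + 1) * dR n) * (kR n ^ i * kR n ^ j))"
      by (simp only: kR_pow_dR mult.assoc)
    finally show ?thesis using dR_dR[of n] by simp
  qed
  then show ?thesis
    unfolding BR_def[of "n + 1"] sum_distrib_right by simp
qed

section \<open>Realisation in a preadditive category\<close>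

definition lam_comb :: "nat \<Rightarrow> nat \<Rightarrow> zendo \<Rightarrow> bool" where
  "lam_comb m n x \<longleftrightarrow> Poly_Mapping.keys x \<subseteq> {g. Rep_endo g \<in> lam m n}"

lemma lam_comb_add: "lam_comb m n x \<Longrightarrow> lam_comb m n y \<Longrightarrow> lam_comb m n (x + y)"
  unfolding lam_comb_def using keys_add[of x y] by blast

lemma lam_comb_neg: "lam_comb m n x \<Longrightarrow> lam_comb m n (- x)"
  unfolding lam_comb_def by (simp add: keys_minus)

lemma lam_comb_diff: "lam_comb m n x \<Longrightarrow> lam_comb m n y \<Longrightarrow> lam_comb m n (x - y)"
  unfolding diff_conv_add_uminus by (intro lam_comb_add lam_comb_neg)

lemma lam_comb_neg_one_power: "lam_comb m n x \<Longrightarrow> lam_comb m n ((- 1) ^ i * x)"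
  by (simp add: minus_one_power_iff lam_comb_neg)

lemma lam_comb_sum: "(\<And>i. i \<in> I \<Longrightarrow> lam_comb m n (X i)) \<Longrightarrow> lam_comb m n (sum X I)"
  unfolding lam_comb_def using keys_sum[of X I] by blast

lemma lam_comb_of_map: "f \<in> lam m n \<Longrightarrow> lam_comb m n (of_map f)"
  by (simp add: lam_comb_def of_map_def Abs_endo_inverse)

lemma lam_comb_mult:
  assumes "lam_comb l m x" "lam_comb m n y"
  shows "lam_comb l n (x * y)"
  unfolding lam_comb_def
proof
  fix c
  assume "c \<in> Poly_Mapping.keys (x * y)"
  then obtain a b where "c = a + b" "a \<in> Poly_Mapping.keys x" "b \<in> Poly_Mapping.keys y"
    using keys_mult[of x y] by blast
  moreover have "Rep_endo b \<circ> Rep_endo a \<in> lam l n"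
    using assms calculation by (auto simp: lam_comb_def intro: comp_in_lam)
  ultimately show "c \<in> {g. Rep_endo g \<in> lam l n}"
    by (simp add: plus_endo_def Abs_endo_inverse)
qed

lemma lam_comb_pow: "lam_comb n n x \<Longrightarrow> lam_comb n n (x ^ k)"
  by (induction k) (simp_all add: lam_comb_mult lam_comb_of_map[OF id_in_lam, unfolded of_map_id])

lemma lam_comb_fR: "i \<le> Suc n \<Longrightarrow> lam_comb n (Suc n) (fR (Suc n) i)"
  unfolding fR_def using lam_comb_of_map[OF eps_in_lam[of "Suc n" i]] by simp

lemma lam_comb_sR: "i \<le> Suc n \<Longrightarrow> lam_comb (Suc n) n (sR n i)"
  unfolding sR_def using lam_comb_of_map[OF eta_in_lam[of i n]] by simp

lemma lam_comb_bR: "lam_comb n (Suc n) (bR (Suc n))"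
  unfolding bR_def by (intro lam_comb_sum lam_comb_neg_one_power lam_comb_fR) simp

lemma lam_comb_dR: "lam_comb (Suc n) n (dR n)"
  unfolding dR_def by (intro lam_comb_sum lam_comb_neg_one_power lam_comb_sR) simp

lemma lam_comb_tR: "lam_comb n n (tR n)"
  unfolding tR_def Suc_eq_plus1[symmetric]
  by (rule lam_comb_mult[OF lam_comb_fR lam_comb_sR]) simp_all

lemma lam_comb_kR: "lam_comb n n (kR n)"
proof (cases n)
  case (Suc m)
  have "lam_comb (Suc m) (Suc m) ((- 1) ^ Suc m * (tR (Suc m) - sR m (Suc m) * fR (Suc m) 0))"
    by (intro lam_comb_neg_one_power lam_comb_diff lam_comb_tR
        lam_comb_mult[OF lam_comb_sR lam_comb_fR]) simp_all
  then show ?thesis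
    using Suc by (simp add: kR_def)
qed (simp add: kR_def lam_comb_tR)

lemma lam_comb_kR_pow: "lam_comb n n (kR n ^ k)"
  by (rule lam_comb_pow[OF lam_comb_kR])

lemma lam_comb_BR: "lam_comb (Suc n) n (BR n)"
  unfolding BR_def by (intro lam_comb_sum lam_comb_mult[OF lam_comb_dR] lam_comb_kR_pow)

lemma lam_comb_kR_pow_sR: "lam_comb (Suc n) n (kR (Suc n) ^ n * sR n (Suc n))"
  by (rule lam_comb_mult[OF lam_comb_kR_pow lam_comb_sR]) simp

definition hom_group :: "('o, 'm) pacat \<Rightarrow> 'o \<Rightarrow> 'o \<Rightarrow> 'm monoid" where
  "hom_group C a b = \<lparr>carrier = pa_hom C a b, mult = pa_add C, one = pa_zero C a b\<rparr>"

lemma hom_group_simps [simp]: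
  "carrier (hom_group C a b) = pa_hom C a b"
  "mult (hom_group C a b) = pa_add C"
  "one (hom_group C a b) = pa_zero C a b"
  by (simp_all add: hom_group_def)

locale preadditive_cat =
  fixes C :: "('o, 'm) pacat"
  assumes preadditive: "preadditive C"
begin

lemmas preadditive_axioms = preadditive[unfolded preadditive_def]

lemma comp_closed: "f \<in> pa_hom C a b \<Longrightarrow> g \<in> pa_hom C b c \<Longrightarrow> pa_comp C g f \<in> pa_hom C a c"
  by (simp add: preadditive_axioms)

lemma neg_closed: "f \<in> pa_hom C a b \<Longrightarrow> pa_neg C f \<in> pa_hom C a b"
  by (simp add: preadditive_axioms)

lemma add_zero_right: "f \<in> pa_hom C a b \<Longrightarrow> pa_add C f (pa_zero C a b) = f"
  by (metis preadditive_axioms)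

lemma comp_add_left:
  "f \<in> pa_hom C a b \<Longrightarrow> g \<in> pa_hom C b c \<Longrightarrow> g' \<in> pa_hom C b c \<Longrightarrow>
    pa_comp C (pa_add C g g') f = pa_add C (pa_comp C g f) (pa_comp C g' f)"
  by (simp add: preadditive_axioms)

lemma comp_add_right:
  "f \<in> pa_hom C a b \<Longrightarrow> f' \<in> pa_hom C a b \<Longrightarrow> g \<in> pa_hom C b c \<Longrightarrow>
    pa_comp C g (pa_add C f f') = pa_add C (pa_comp C g f) (pa_comp C g f')"
  by (simp add: preadditive_axioms)

lemma comm_group_hom_group: "comm_group (hom_group C a b)"
proof (rule comm_groupI)
  fix x
  assume "x \<in> carrier (hom_group C a b)"
  then show "\<exists>y\<in>carrier (hom_group C a b). y \<otimes>\<^bsub>hom_group C a b\<^esub> x = \<one>\<^bsub>hom_group C a b\<^esub>"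
    by (auto simp: preadditive_axioms intro!: bexI[of _ "pa_neg C x"])
qed (auto simp: preadditive_axioms)

lemma inv_hom_group: "f \<in> pa_hom C a b \<Longrightarrow> inv\<^bsub>hom_group C a b\<^esub> f = pa_neg C f"
proof -
  assume f: "f \<in> pa_hom C a b"
  interpret comm_group "hom_group C a b" by (rule comm_group_hom_group)
  show ?thesis by (rule inv_equality) (use f in \<open>auto simp: preadditive_axioms\<close>)
qed

lemma group_hom_comp_left:
  "g \<in> pa_hom C b c \<Longrightarrow> group_hom (hom_group C a b) (hom_group C a c) (pa_comp C g)"
  unfolding group_hom_def group_hom_axioms_def hom_def
  using comm_group_hom_group comm_group.axioms(2) comp_closed comp_add_right by fastforce

lemma group_hom_comp_right:
  "f \<in> pa_hom C a b \<Longrightarrow> group_hom (hom_group C b c) (hom_group C a c) (\<lambda>g. pa_comp C g f)"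
  unfolding group_hom_def group_hom_axioms_def hom_def
  using comm_group_hom_group comm_group.axioms(2) comp_closed comp_add_left by fastforce

lemma comp_zero_right: "g \<in> pa_hom C b c \<Longrightarrow> pa_comp C g (pa_zero C a b) = pa_zero C a c"
  using group_hom.hom_one[OF group_hom_comp_left[of g b c a]] by simp

lemma comp_zero_left: "f \<in> pa_hom C a b \<Longrightarrow> pa_comp C (pa_zero C b c) f = pa_zero C a c"
  using group_hom.hom_one[OF group_hom_comp_right[of f a b c]] by simp

lemma comp_neg_right:
  "g \<in> pa_hom C b c \<Longrightarrow> f \<in> pa_hom C a b \<Longrightarrow> pa_comp C g (pa_neg C f) = pa_neg C (pa_comp C g f)"
  using group_hom.hom_inv[OF group_hom_comp_left[of g b c a], of f]
  by (simp add: inv_hom_group comp_closed)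

lemma comp_neg_left:
  "g \<in> pa_hom C b c \<Longrightarrow> f \<in> pa_hom C a b \<Longrightarrow> pa_comp C (pa_neg C g) f = pa_neg C (pa_comp C g f)"
  using group_hom.hom_inv[OF group_hom_comp_right[of f a b c], of g]
  by (simp add: inv_hom_group comp_closed)

end

locale duplicial_module = preadditive_cat +
  fixes Mo :: "nat \<Rightarrow> 'o" and Mf :: "nat \<Rightarrow> nat \<Rightarrow> (int \<Rightarrow> int) \<Rightarrow> 'm"
  assumes duplicial: "duplicial C Mo Mf"
begin

lemma Mf_closed: "f \<in> lam m n \<Longrightarrow> Mf m n f \<in> pa_hom C (Mo n) (Mo m)"
  using duplicial unfolding duplicial_def by blast

lemma Mf_id: "Mf m m id = pa_id C (Mo m)"
  using duplicial unfolding duplicial_def by blast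

lemma Mf_comp: "f \<in> lam l m \<Longrightarrow> g \<in> lam m n \<Longrightarrow> Mf l n (g \<circ> f) = pa_comp C (Mf l m f) (Mf m n g)"
  using duplicial unfolding duplicial_def by blast

text \<open>Summands outside \<open>\<Lambda>\<^sub>+([m],[n])\<close> are sent to zero; hence \<open>realize\<close> is
  multiplicative only on elements satisfying \<open>lam_comb\<close>.\<close>

definition realize_term :: "nat \<Rightarrow> nat \<Rightarrow> zendo \<Rightarrow> endo \<Rightarrow> 'm" where
  "realize_term m n x g =
    (if Rep_endo g \<in> lam m n
     then Mf m n (Rep_endo g) [^]\<^bsub>hom_group C (Mo n) (Mo m)\<^esub> Poly_Mapping.lookup x g
     else pa_zero C (Mo n) (Mo m))"

definition realize :: "nat \<Rightarrow> nat \<Rightarrow> zendo \<Rightarrow> 'm" where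
  "realize m n x = finprod (hom_group C (Mo n) (Mo m)) (realize_term m n x) (Poly_Mapping.keys x)"

lemma realize_term_closed: "realize_term m n x g \<in> pa_hom C (Mo n) (Mo m)"
proof -
  interpret comm_group "hom_group C (Mo n) (Mo m)" by (rule comm_group_hom_group)
  show ?thesis
    using int_pow_closed Mf_closed one_closed by (auto simp: realize_term_def)
qed

lemma realize_term_Pi: "realize_term m n x \<in> A \<rightarrow> carrier (hom_group C (Mo n) (Mo m))"
  using realize_term_closed by simp

lemma realize_term_add:
  "realize_term m n (x + y) g = pa_add C (realize_term m n x g) (realize_term m n y g)"
proof -
  interpret comm_group "hom_group C (Mo n) (Mo m)" by (rule comm_group_hom_group)
  show ?thesis
    using int_pow_mult[OF Mf_closed[unfolded hom_group_simps(1)[symmetric]]] l_one[OF one_closed]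
    by (simp add: realize_term_def Poly_Mapping.lookup_add)
qed

lemma realize_eq_finprod:
  assumes "finite A" "Poly_Mapping.keys x \<subseteq> A"
  shows "realize m n x = finprod (hom_group C (Mo n) (Mo m)) (realize_term m n x) A"
proof -
  interpret comm_group "hom_group C (Mo n) (Mo m)" by (rule comm_group_hom_group)
  show ?thesis
    unfolding realize_def
    by (rule finprod_mono_neutral_cong_left[OF assms])
      (use realize_term_Pi in \<open>auto simp: realize_term_def in_keys_iff\<close>)
qed

lemma realize_closed: "realize m n x \<in> pa_hom C (Mo n) (Mo m)"
proof -
  interpret comm_group "hom_group C (Mo n) (Mo m)" by (rule comm_group_hom_group)
  show ?thesis
    unfolding realize_def using finprod_closed[OF realize_term_Pi] by simp
qed

lemma realize_zero: "realize m n 0 = pa_zero C (Mo n) (Mo m)"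
proof -
  interpret comm_group "hom_group C (Mo n) (Mo m)" by (rule comm_group_hom_group)
  show ?thesis unfolding realize_def by simp
qed

lemma realize_add: "realize m n (x + y) = pa_add C (realize m n x) (realize m n y)"
proof -
  interpret comm_group "hom_group C (Mo n) (Mo m)" by (rule comm_group_hom_group)
  let ?A = "Poly_Mapping.keys x \<union> Poly_Mapping.keys y"
  have "realize m n (x + y) = finprod (hom_group C (Mo n) (Mo m)) (realize_term m n (x + y)) ?A"
    by (rule realize_eq_finprod) (simp_all add: keys_add)
  also have "realize_term m n (x + y)
      = (\<lambda>g. pa_add C (realize_term m n x g) (realize_term m n y g))"
    by (rule ext) (rule realize_term_add)
  also have "finprod (hom_group C (Mo n) (Mo m)) \<dots> ?A
      = pa_add C (finprod (hom_group C (Mo n) (Mo m)) (realize_term m n x) ?A)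
                 (finprod (hom_group C (Mo n) (Mo m)) (realize_term m n y) ?A)"
    using finprod_multf[OF realize_term_Pi realize_term_Pi] by simp
  also have "\<dots> = pa_add C (realize m n x) (realize m n y)"
    using realize_eq_finprod[of ?A x m n] realize_eq_finprod[of ?A y m n] by simp
  finally show ?thesis .
qed

lemma realize_neg: "realize m n (- x) = pa_neg C (realize m n x)"
proof -
  interpret comm_group "hom_group C (Mo n) (Mo m)" by (rule comm_group_hom_group)
  have "pa_add C (realize m n (- x)) (realize m n x) = pa_zero C (Mo n) (Mo m)"
    by (simp flip: realize_add add: realize_zero)
  then have "inv\<^bsub>hom_group C (Mo n) (Mo m)\<^esub> (realize m n x) = realize m n (- x)"
    using inv_equality realize_closed by simp
  then show ?thesis
    by (simp add: inv_hom_group realize_closed)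
qed

lemma realize_diff: "realize m n (x - y) = pa_add C (realize m n x) (pa_neg C (realize m n y))"
  by (simp only: diff_conv_add_uminus realize_add realize_neg)

lemma realize_neg_one_power: "realize m n ((- 1) ^ k * x) = sgnm C k (realize m n x)"
  by (simp add: minus_one_power_iff sgnm_def realize_neg)

lemma realize_alternating_sum:
  "realize m n (\<Sum>i\<le>k. (- 1) ^ i * X i) = ssum C (\<lambda>i. realize m n (X i)) k"
  by (induction k) (simp_all del: power_Suc add: realize_add realize_neg_one_power)

lemma realize_sum: "realize m n (\<Sum>i\<le>k. X i) = psum C (\<lambda>i. realize m n (X i)) k"
  by (induction k) (simp_all add: realize_add)

lemma realize_of_map: "f \<in> lam m n \<Longrightarrow> realize m n (of_map f) = Mf m n f"
proof -
  assume f: "f \<in> lam m n"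
  interpret comm_group "hom_group C (Mo n) (Mo m)" by (rule comm_group_hom_group)
  have "Poly_Mapping.keys (of_map f) = {Abs_endo f}"
    by (simp add: of_map_def)
  then have "realize m n (of_map f) = realize_term m n (of_map f) (Abs_endo f)"
    unfolding realize_def using realize_term_closed add_zero_right by simp
  also have "\<dots> = Mf m n f"
    using f Mf_closed[OF f] by (simp add: realize_term_def of_map_def Abs_endo_inverse)
  finally show ?thesis .
qed

lemma realize_mult_of_map:
  assumes g: "Rep_endo g \<in> lam l m" and y: "lam_comb m n y"
  shows "realize l n (frag_of g * y) = pa_comp C (realize l m (frag_of g)) (realize m n y)"
proof -
  have "Poly_Mapping.keys y \<subseteq> {h. Rep_endo h \<in> lam m n}" using y by (simp add: lam_comb_def)
  then show ?thesis
  proof (induction y rule: frag_induction)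
    case zero
    then show ?case using comp_zero_right[OF realize_closed] by (simp add: realize_zero)
  next
    case (one h)
    have of_map: "frag_of g = of_map (Rep_endo g)" "frag_of h = of_map (Rep_endo h)"
      by (simp_all add: of_map_def Rep_endo_inverse)
    have h: "Rep_endo h \<in> lam m n" using one by simp
    show ?case
      unfolding of_map of_map_mult
      using realize_of_map[OF comp_in_lam[OF g h]] realize_of_map[OF g] realize_of_map[OF h]
        Mf_comp[OF g h]
      by simp
  next
    case (diff a b)
    then show ?case
      by (simp add: right_diff_distrib realize_diff comp_neg_right[OF realize_closed realize_closed]
          comp_add_right[OF realize_closed neg_closed[OF realize_closed] realize_closed])
  qed
qed

lemma realize_mult:
  assumes x: "lam_comb l m x" and y: "lam_comb m n y"
  shows "realize l n (x * y) = pa_comp C (realize l m x) (realize m n y)"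
proof -
  have "Poly_Mapping.keys x \<subseteq> {g. Rep_endo g \<in> lam l m}" using x by (simp add: lam_comb_def)
  then show ?thesis
  proof (induction x rule: frag_induction)
    case zero
    then show ?case using comp_zero_left[OF realize_closed] by (simp add: realize_zero)
  next
    case (one g)
    then show ?case using realize_mult_of_map[OF _ y] by simp
  next
    case (diff a b)
    then show ?case
      by (simp add: left_diff_distrib realize_diff comp_neg_left[OF realize_closed realize_closed]
          comp_add_left[OF realize_closed realize_closed neg_closed[OF realize_closed]])
  qed
qed

end

lemma ssum_cong: "(\<And>i. i \<le> k \<Longrightarrow> f i = g i) \<Longrightarrow> ssum C f k = ssum C g k"
  by (induction k) auto

lemma psum_cong: "(\<And>i. i \<le> k \<Longrightarrow> f i = g i) \<Longrightarrow> psum C f k = psum C g k"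
  by (induction k) auto

context duplicial_module
begin

lemma face_eq_realize: "i \<le> Suc n \<Longrightarrow> face Mf (Suc n) i = realize n (Suc n) (fR (Suc n) i)"
  unfolding face_def fR_def using realize_of_map[OF eps_in_lam[of "Suc n" i]] by simp

lemma degen_eq_realize: "i \<le> Suc n \<Longrightarrow> degen Mf n i = realize (Suc n) n (sR n i)"
  unfolding degen_def sR_def using realize_of_map[OF eta_in_lam[of i n]] by simp

lemma id_eq_realize: "pa_id C (Mo n) = realize n n 1"
  using realize_of_map[OF id_in_lam, of n] Mf_id by (simp add: of_map_id)

lemma bop_eq_realize: "bop C Mf (Suc n) = realize n (Suc n) (bR (Suc n))"
  unfolding bop_def bR_def realize_alternating_sum by (rule ssum_cong) (simp add: face_eq_realize)

lemma dop_eq_realize: "dop C Mf n = realize (Suc n) n (dR n)"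
  unfolding dop_def dR_def realize_alternating_sum by (rule ssum_cong) (simp add: degen_eq_realize)

lemma kappa_eq_realize: "kappa C Mf n = realize n n (kR n)"
proof -
  have t: "pa_comp C (face Mf (Suc n) 0) (degen Mf n (Suc n)) = realize n n (tR n)"
    unfolding tR_def Suc_eq_plus1[symmetric] face_eq_realize[OF le0] degen_eq_realize[OF order_refl]
    by (rule realize_mult[symmetric, OF lam_comb_fR lam_comb_sR]) simp_all
  show ?thesis
  proof (cases n)
    case 0
    then show ?thesis using t by (simp add: kappa_def kR_def)
  next
    case (Suc m)
    have "pa_comp C (degen Mf m (Suc m)) (face Mf (Suc m) 0)
        = realize (Suc m) (Suc m) (sR m (Suc m) * fR (Suc m) 0)"
      unfolding face_eq_realize[OF le0] degen_eq_realize[OF order_refl]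
      by (rule realize_mult[symmetric, OF lam_comb_sR lam_comb_fR]) simp_all
    then show ?thesis
      using Suc t by (simp del: power_Suc add: kappa_def kR_def realize_neg_one_power realize_diff)
  qed
qed

lemma kpow_eq_realize: "kpow C Mo Mf n k = realize n n (kR n ^ k)"
proof (induction k)
  case 0
  then show ?case by (simp add: id_eq_realize)
next
  case (Suc k)
  then show ?case
    using realize_mult[OF lam_comb_kR lam_comb_kR_pow] by (simp add: kappa_eq_realize)
qed

lemma connesB_eq_realize: "connesB C Mo Mf n = realize (Suc n) n (BR n)"
  unfolding connesB_def BR_def realize_sum
  by (rule psum_cong)
    (simp add: dop_eq_realize kpow_eq_realize realize_mult[OF lam_comb_dR lam_comb_kR_pow])

lemma piop_eq_realize: "piop C Mo Mf n = realize n n (piR n)"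
proof -
  have "pa_comp C (kpow C Mo Mf (Suc n) n) (degen Mf n (Suc n))
      = realize (Suc n) n (kR (Suc n) ^ n * sR n (Suc n))"
    unfolding kpow_eq_realize degen_eq_realize[OF order_refl]
    by (rule realize_mult[symmetric, OF lam_comb_kR_pow lam_comb_sR]) simp
  then have "pa_comp C (face Mf (Suc n) 0) (pa_comp C (kpow C Mo Mf (Suc n) n) (degen Mf n (Suc n)))
      = realize n n (fR (Suc n) 0 * (kR (Suc n) ^ n * sR n (Suc n)))"
    unfolding face_eq_realize[OF le0]
    using realize_mult[OF lam_comb_fR lam_comb_kR_pow_sR, of 0] by simp
  then show ?thesis
    by (simp add: piop_def piR_def realize_neg_one_power)
qed

lemma bop_connesB_homotopy:
  "pa_add C (pa_comp C (bop C Mf (Suc n)) (connesB C Mo Mf n))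
            (if n = 0 then pa_zero C (Mo 0) (Mo 0)
             else pa_comp C (connesB C Mo Mf (n - 1)) (bop C Mf n))
     = pa_add C (pa_id C (Mo n)) (pa_neg C (piop C Mo Mf n))"
proof -
  have bB: "pa_comp C (bop C Mf (Suc k)) (connesB C Mo Mf k)
      = realize k k (bR (Suc k) * BR k)" for k
    unfolding bop_eq_realize connesB_eq_realize
    by (rule realize_mult[symmetric, OF lam_comb_bR lam_comb_BR])
  have rhs: "pa_add C (pa_id C (Mo n)) (pa_neg C (piop C Mo Mf n)) = realize n n (1 - piR n)"
    by (simp add: id_eq_realize piop_eq_realize realize_diff)
  show ?thesis
  proof (cases n)
    case 0
    then show ?thesis
      using bB[of 0] bR_BR_0 realize_closed[of 0 0] rhs by (simp add: realize_zero add_zero_right)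
  next
    case (Suc m)
    have Bb: "pa_comp C (connesB C Mo Mf m) (bop C Mf (Suc m))
        = realize (Suc m) (Suc m) (BR m * bR (Suc m))"
      unfolding bop_eq_realize connesB_eq_realize
      by (rule realize_mult[symmetric, OF lam_comb_BR lam_comb_bR])
    show ?thesis
      using Suc bB[of n] Bb rhs bR_BR_plus_BR_bR[of m] by (simp flip: realize_add)
  qed
qed

lemma connesB_connesB:
  "pa_comp C (connesB C Mo Mf (Suc n)) (connesB C Mo Mf n) = pa_zero C (Mo n) (Mo (n + 2))"
  unfolding connesB_eq_realize
  using realize_mult[OF lam_comb_BR lam_comb_BR, of n] BR_BR[of n] by (simp add: realize_zero)

end

theorem mainTheorem17:
  fixes C :: "('o, 'm) pacat"
    and Mo :: "nat \<Rightarrow> 'o"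
    and Mf :: "nat \<Rightarrow> nat \<Rightarrow> (int \<Rightarrow> int) \<Rightarrow> 'm"
  assumes "preadditive C"
    and "duplicial C Mo Mf"
  shows "\<forall>n. pa_add C (pa_comp C (bop C Mf (Suc n)) (connesB C Mo Mf n))
                      (if n = 0 then pa_zero C (Mo 0) (Mo 0)
                       else pa_comp C (connesB C Mo Mf (n - 1)) (bop C Mf n))
             = pa_add C (pa_id C (Mo n)) (pa_neg C (piop C Mo Mf n))
           \<and> pa_comp C (connesB C Mo Mf (Suc n)) (connesB C Mo Mf n) = pa_zero C (Mo n) (Mo (n + 2))"
proof -
  interpret duplicial_module C Mo Mf
    using assms by unfold_locales
  show ?thesis
    using bop_connesB_homotopy connesB_connesB by blast
qed

end
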